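(* Let $G$ be a $(3,4)$-biregular $X,Y$-bigraph in which every vertex of $X$ has degree 3 and every vertex of $Y$ has degree 4. If $G$ has a subgraph that contains every vertex of $X$ and is a $(2,4)$-biregular bigraph, then $G$ has a $P_7$-factor (and hence an interval 6-coloring).
   Context: Graphs may have multiple edges. An $X,Y$-bigraph is a bipartite graph with partite sets $X$ and $Y$. An $(a,b)$-biregular bigraph is a bipartite graph in which every vertex of one part has degree $a$ and every vertex of the other part has degree $b$. A $P_7$-factor is a spanning subgraph each of whose components is a path on 7 vertices. An interval 6-coloring is a proper edge-coloring with colors from $\{1,\dots,6\}$ such that at every vertex the colors on its incident edges form a set of consecutive integers. *)

theory Defs
  imports Main
begin

text \<open>Multigraph bigraphs: a finite set E of edge identifiers, each edge e having
  endpoints ends e = (x, y) with x in X and y in Y. Parallel edges are allowed.\<close>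

definition incident :: "('e \<Rightarrow> 'v \<times> 'v) \<Rightarrow> 'e \<Rightarrow> 'v \<Rightarrow> bool" where
  "incident ends e v \<longleftrightarrow> fst (ends e) = v \<or> snd (ends e) = v"

definition joins :: "('e \<Rightarrow> 'v \<times> 'v) \<Rightarrow> 'e \<Rightarrow> 'v \<Rightarrow> 'v \<Rightarrow> bool" where
  "joins ends e u w \<longleftrightarrow> ends e = (u, w) \<or> ends e = (w, u)"

definition deg :: "'e set \<Rightarrow> ('e \<Rightarrow> 'v \<times> 'v) \<Rightarrow> 'v \<Rightarrow> nat" where
  "deg E ends v = card {e \<in> E. incident ends e v}"

definition bigraph :: "'v set \<Rightarrow> 'v set \<Rightarrow> 'e set \<Rightarrow> ('e \<Rightarrow> 'v \<times> 'v) \<Rightarrow> bool" where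
  "bigraph X Y E ends \<longleftrightarrow> finite X \<and> finite Y \<and> finite E \<and> X \<inter> Y = {} \<and>
     (\<forall>e\<in>E. fst (ends e) \<in> X \<and> snd (ends e) \<in> Y)"

definition biregular :: "'v set \<Rightarrow> 'v set \<Rightarrow> 'e set \<Rightarrow> ('e \<Rightarrow> 'v \<times> 'v) \<Rightarrow> nat \<Rightarrow> nat \<Rightarrow> bool" where
  "biregular X Y E ends a b \<longleftrightarrow> bigraph X Y E ends \<and>
     (\<forall>x\<in>X. deg E ends x = a) \<and> (\<forall>y\<in>Y. deg E ends y = b)"

definition P7_factor :: "'v set \<Rightarrow> 'e set \<Rightarrow> ('e \<Rightarrow> 'v \<times> 'v) \<Rightarrow> bool" where
  "P7_factor V E ends \<longleftrightarrow> (\<exists>F P. F \<subseteq> E \<and>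
     (\<forall>p\<in>P. distinct p \<and> length p = 7) \<and>
     (\<forall>p\<in>P. \<forall>q\<in>P. p \<noteq> q \<longrightarrow> set p \<inter> set q = {}) \<and>
     (\<Union>p\<in>P. set p) = V \<and>
     (\<forall>p\<in>P. \<forall>i<6. \<exists>!e. e \<in> F \<and> joins ends e (p ! i) (p ! Suc i)) \<and>
     (\<forall>e\<in>F. \<exists>p\<in>P. \<exists>i<6. joins ends e (p ! i) (p ! Suc i)))"

definition interval_coloring :: "nat \<Rightarrow> 'v set \<Rightarrow> 'e set \<Rightarrow> ('e \<Rightarrow> 'v \<times> 'v) \<Rightarrow> ('e \<Rightarrow> nat) \<Rightarrow> bool" where
  "interval_coloring k V E ends c \<longleftrightarrow>
     (\<forall>e\<in>E. c e \<in> {1..k}) \<and>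
     (\<forall>v\<in>V. \<forall>e\<in>E. \<forall>e'\<in>E. e \<noteq> e' \<and> incident ends e v \<and> incident ends e' v \<longrightarrow> c e \<noteq> c e') \<and>
     (\<forall>v\<in>V. \<exists>a b. c ` {e \<in> E. incident ends e v} = {a..b})"

end

theory Submission
  imports Defs
begin

text \<open>
  Let Z = Y - Y'. Every vertex of Y' has all four of its edges in F, so each x \<in> X has two F-edges
  into Y' and its third edge r x into Z. Choose one F-edge a x at every x so that every y \<in> Y'
  receives exactly two of them, from c y and n y; then choose the labelling c/n so that every
  z \<in> Z receives exactly two of the edges r (c y), from y = q1 z and y = q2 z. Both choices halve
  even fibres of a pairing, which follows from an Euler-type orientation of an auxiliary multigraph
  in which every vertex has as many outgoing as incoming edges. The paths
  n (q1 z), q1 z, c (q1 z), z, c (q2 z), q2 z, n (q2 z) for z \<in> Z form a P7-factor.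

  The edges outside the factor form a bipartite graph of maximum degree 2; colour them properly
  with 3 and 4. The six edges of each path are coloured from {1, 2, 5, 6} by a table that depends
  only on the colours of the remaining edges at c (q1 z) and c (q2 z), and the colours at every
  vertex then form an interval.
\<close>

section \<open>Almost balanced orientations of multigraphs\<close>

definition tail :: "('e \<Rightarrow> bool) \<Rightarrow> ('e \<Rightarrow> 'v \<times> 'v) \<Rightarrow> 'e \<Rightarrow> 'v" where
  "tail ori ends e = (if ori e then fst (ends e) else snd (ends e))"

definition head :: "('e \<Rightarrow> bool) \<Rightarrow> ('e \<Rightarrow> 'v \<times> 'v) \<Rightarrow> 'e \<Rightarrow> 'v" where
  "head ori ends e = (if ori e then snd (ends e) else fst (ends e))"

definition imbalance :: "'e set \<Rightarrow> ('e \<Rightarrow> 'v \<times> 'v) \<Rightarrow> ('e \<Rightarrow> bool) \<Rightarrow> 'v \<Rightarrow> int" where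
  "imbalance E ends ori v = (\<Sum>e\<in>E. of_bool (tail ori ends e = v) - of_bool (head ori ends e = v))"

definition end_count :: "'e set \<Rightarrow> ('e \<Rightarrow> 'v \<times> 'v) \<Rightarrow> 'v \<Rightarrow> nat" where
  "end_count E ends v = (\<Sum>e\<in>E. of_bool (fst (ends e) = v) + of_bool (snd (ends e) = v))"

lemma imbalance_remove:
  assumes "finite E" "e \<in> E"
  shows "imbalance E ends ori v =
    of_bool (tail ori ends e = v) - of_bool (head ori ends e = v) + imbalance (E - {e}) ends ori v"
  unfolding imbalance_def using assms by (simp add: sum.remove)

lemma imbalance_cong:
  assumes "\<And>e. e \<in> E \<Longrightarrow> ori e = ori' e \<and> ends e = ends' e"
  shows "imbalance E ends ori = imbalance E ends' ori'"
  unfolding imbalance_def tail_def head_def using assms by (intro ext sum.cong) auto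

lemma imbalance_without_loop:
  assumes "finite E" "e \<in> E" "fst (ends e) = snd (ends e)"
  shows "imbalance E ends ori = imbalance (E - {e}) ends ori"
proof
  fix v
  show "imbalance E ends ori v = imbalance (E - {e}) ends ori v"
    using imbalance_remove[OF assms(1,2), of ends ori v] assms(3) by (simp add: tail_def head_def)
qed

text \<open>Orienting a path u \<rightarrow> v \<rightarrow> w like its contraction u \<rightarrow> w leaves every imbalance unchanged.\<close>
lemma imbalance_uncontract:
  assumes fin: "finite E" and e1: "e1 \<in> E" and e2: "e2 \<in> E" "e2 \<noteq> e1"
    and uv: "ends e1 = (u, v)" and v: "fst (ends e2) = v \<or> snd (ends e2) = v"
  defines "w \<equiv> if fst (ends e2) = v then snd (ends e2) else fst (ends e2)"
  shows "imbalance E ends (ori(e2 := if ori e1 then fst (ends e2) = v else snd (ends e2) = v)) =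
    imbalance (E - {e2}) (ends(e1 := (u, w))) ori"
proof
  fix x
  let ?ori = "ori(e2 := if ori e1 then fst (ends e2) = v else snd (ends e2) = v)"
  let ?ends = "ends(e1 := (u, w))"
  let ?E = "E - {e1, e2}"
  have e1': "e1 \<in> E - {e2}" using e1 e2 by auto
  have others: "imbalance ?E ends ?ori = imbalance ?E ?ends ori"
    by (rule imbalance_cong) auto
  have E_split: "E - {e2} - {e1} = ?E" by auto
  have "imbalance E ends ?ori x = of_bool (tail ?ori ends e2 = x) - of_bool (head ?ori ends e2 = x)
      + (of_bool (tail ?ori ends e1 = x) - of_bool (head ?ori ends e1 = x)) + imbalance ?E ends ?ori x"
    using imbalance_remove[OF fin e2(1), of ends ?ori x] imbalance_remove[OF _ e1', of ends ?ori x] fin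
    unfolding E_split by simp
  moreover have "imbalance (E - {e2}) ?ends ori x
      = of_bool (tail ori ?ends e1 = x) - of_bool (head ori ?ends e1 = x) + imbalance ?E ?ends ori x"
    using imbalance_remove[OF _ e1', of ?ends ori x] fin unfolding E_split by simp
  moreover have "of_bool (tail ?ori ends e2 = x) - of_bool (head ?ori ends e2 = x)
      + (of_bool (tail ?ori ends e1 = x) - of_bool (head ?ori ends e1 = x))
      = (of_bool (tail ori ?ends e1 = x) - of_bool (head ori ?ends e1 = x) :: int)"
    using uv v e2(2) unfolding tail_def head_def w_def by (cases "ori e1"; cases "fst (ends e2) = v") auto
  ultimately show "imbalance E ends ?ori x = imbalance (E - {e2}) ?ends ori x"
    using others by simp
qed

lemma imbalance_isolated:
  assumes "\<forall>e\<in>E. fst (ends e) \<noteq> v \<and> snd (ends e) \<noteq> v"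
  shows "imbalance E ends ori v = 0"
  unfolding imbalance_def using assms by (intro sum.neutral) (auto simp: tail_def head_def)

lemma almost_balanced_orientation:
  assumes "finite E"
  shows "\<exists>ori. \<forall>v. \<bar>imbalance E ends ori v\<bar> \<le> 1"
  using assms
proof (induction "card E" arbitrary: E ends rule: less_induct)
  case less
  show ?case
  proof (cases "E = {}")
    case True
    then show ?thesis by (simp add: imbalance_def)
  next
    case False
    then obtain e1 u v where e1: "e1 \<in> E" and uv: "ends e1 = (u, v)" by (metis ex_in_conv surj_pair)
    have smaller: "card (E - {e}) < card E" if "e \<in> E" for e
      using card_Diff1_less[OF less.prems that] .
    show ?thesis
    proof (cases "u = v")
      case True
      obtain ori where "\<forall>x. \<bar>imbalance (E - {e1}) ends ori x\<bar> \<le> 1"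
        using less.hyps[OF smaller[OF e1]] less.prems by blast
      then show ?thesis using imbalance_without_loop[OF less.prems e1] uv True by (metis fst_conv snd_conv)
    next
      case u_ne_v: False
      show ?thesis
      proof (cases "\<exists>e2\<in>E - {e1}. fst (ends e2) = v \<or> snd (ends e2) = v")
        case True
        then obtain e2 where e2: "e2 \<in> E" "e2 \<noteq> e1" and v: "fst (ends e2) = v \<or> snd (ends e2) = v"
          by blast
        define w where "w = (if fst (ends e2) = v then snd (ends e2) else fst (ends e2))"
        obtain ori where "\<forall>x. \<bar>imbalance (E - {e2}) (ends(e1 := (u, w))) ori x\<bar> \<le> 1"
          using less.hyps[OF smaller[OF e2(1)]] less.prems by blast
        then show ?thesis
          using imbalance_uncontract[OF less.prems e1 e2 uv v] unfolding w_def by metis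
      next
        case False
        obtain ori where ori: "\<forall>x. \<bar>imbalance (E - {e1}) ends ori x\<bar> \<le> 1"
          using less.hyps[OF smaller[OF e1]] less.prems by blast
        txt \<open>v has no other edge; orient e1 so that it moves the imbalance of u towards 0.\<close>
        define ori' where "ori' = ori(e1 := imbalance (E - {e1}) ends ori u \<le> 0)"
        have same: "imbalance (E - {e1}) ends ori' = imbalance (E - {e1}) ends ori"
          unfolding ori'_def by (rule imbalance_cong) auto
        have "imbalance (E - {e1}) ends ori v = 0"
          using False by (intro imbalance_isolated) auto
        then have "\<bar>imbalance E ends ori' x\<bar> \<le> 1" for x
          using imbalance_remove[OF less.prems e1, of ends ori' x] ori[rule_format, of x] same uv u_ne_v
          unfolding ori'_def tail_def head_def by auto
        then show ?thesis by blast
      qed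
    qed
  qed
qed

lemma imbalance_via_tail_count:
  assumes "finite E"
  shows "imbalance E ends ori v = 2 * int (card {e\<in>E. tail ori ends e = v}) - int (end_count E ends v)"
proof -
  have edge: "of_bool (tail ori ends e = v) - of_bool (head ori ends e = v)
      = 2 * of_bool (tail ori ends e = v) - (of_bool (fst (ends e) = v) + of_bool (snd (ends e) = v) :: int)" for e
    unfolding tail_def head_def by auto
  have "card {e\<in>E. tail ori ends e = v} = (\<Sum>e\<in>E. (of_bool (tail ori ends e = v) :: nat))"
    using assms by (simp add: Int_def conj_commute)
  then show ?thesis
    unfolding imbalance_def end_count_def edge sum_subtractf sum_distrib_left[symmetric] by simp
qed

lemma balanced_orientation:
  assumes "finite E" and "\<And>v. even (end_count E ends v)"
  shows "\<exists>ori. \<forall>v. 2 * card {e\<in>E. tail ori ends e = v} = end_count E ends v"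
proof -
  obtain ori where ori: "\<bar>imbalance E ends ori v\<bar> \<le> 1" for v
    using almost_balanced_orientation[OF assms(1)] by blast
  have "2 * card {e\<in>E. tail ori ends e = v} = end_count E ends v" for v
  proof -
    have "even (imbalance E ends ori v)"
      using assms(2)[of v] unfolding imbalance_via_tail_count[OF assms(1)] by simp
    then have "imbalance E ends ori v = 0" using ori[of v] by presburger
    then show ?thesis unfolding imbalance_via_tail_count[OF assms(1)] by simp
  qed
  then show ?thesis by blast
qed

definition proper_edge_colouring :: "'e set \<Rightarrow> ('e \<Rightarrow> 'v \<times> 'v) \<Rightarrow> ('e \<Rightarrow> 'c) \<Rightarrow> bool" where
  "proper_edge_colouring E ends col \<longleftrightarrow>
     (\<forall>v. \<forall>e\<in>E. \<forall>f\<in>E. e \<noteq> f \<and> incident ends e v \<and> incident ends f v \<longrightarrow> col e \<noteq> col f)"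

text \<open>Colour an edge by its direction in an almost balanced orientation: a vertex of degree 2
  has one outgoing and one incoming edge, and in a bigraph these point in opposite directions
  between X and Y.\<close>
lemma bigraph_edge_colouring_degree_le_2:
  assumes G: "bigraph X Y E ends" and deg: "\<And>v. deg E ends v \<le> 2"
  shows "\<exists>col :: 'e \<Rightarrow> bool. proper_edge_colouring E ends col"
proof -
  have fin: "finite E" and disj: "X \<inter> Y = {}" and XY: "\<And>e. e \<in> E \<Longrightarrow> fst (ends e) \<in> X \<and> snd (ends e) \<in> Y"
    using G unfolding bigraph_def by auto
  obtain ori where ori: "\<bar>imbalance E ends ori v\<bar> \<le> 1" for v
    using almost_balanced_orientation[OF fin] by blast
  have sign: "of_bool (tail ori ends e = v) - of_bool (head ori ends e = v)
      = (if ori e = (v \<in> X) then 1 else - 1 :: int)" if "e \<in> E" "incident ends e v" for e v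
    using XY[OF that(1)] that(2) disj unfolding incident_def tail_def head_def by auto
  have "ori e \<noteq> ori f"
    if e: "e \<in> E" "f \<in> E" "e \<noteq> f" "incident ends e v" "incident ends f v" for v e f
  proof -
    have "{e, f} \<subseteq> {g\<in>E. incident ends g v}" using e by auto
    moreover have "card {g\<in>E. incident ends g v} \<le> card {e, f}"
      using deg[of v] e(3) unfolding deg_def by simp
    ultimately have at_v: "{g\<in>E. incident ends g v} = {e, f}"
      using fin by (intro card_seteq[symmetric]) auto
    have "imbalance E ends ori v = (\<Sum>g\<in>{e, f}. of_bool (tail ori ends g = v) - of_bool (head ori ends g = v))"
      unfolding imbalance_def using fin e at_v
      by (intro sum.mono_neutral_right) (auto simp: incident_def tail_def head_def)
    then show ?thesis using ori[of v] e sign[OF e(1,4)] sign[OF e(2,5)] by (auto split: if_splits)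
  qed
  then show ?thesis unfolding proper_edge_colouring_def by blast
qed

text \<open>Orient the multigraph with an edge between h (u1 t) and h (u2 t) for every pair
  {u1 t, u2 t}; the end at the tail is the chosen element.\<close>
lemma pair_choice_halving:
  assumes S: "finite S" and T: "finite T" and g: "\<And>s. s \<in> S \<Longrightarrow> g s \<in> T"
    and pairs: "\<And>t. t \<in> T \<Longrightarrow> card {s\<in>S. g s = t} = 2"
    and even: "\<And>v. even (card {s\<in>S. h s = v})"
  obtains c d where "\<And>t. t \<in> T \<Longrightarrow> c t \<noteq> d t \<and> {s\<in>S. g s = t} = {c t, d t}"
    and "\<And>v. 2 * card {t\<in>T. h (c t) = v} = card {s\<in>S. h s = v}"
proof -
  have "\<forall>t\<in>T. \<exists>p q. {s\<in>S. g s = t} = {p, q} \<and> p \<noteq> q"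
    using pairs by (simp add: card_2_iff)
  then obtain u1 u2 where u: "\<And>t. t \<in> T \<Longrightarrow> {s\<in>S. g s = t} = {u1 t, u2 t} \<and> u1 t \<noteq> u2 t"
    by metis
  define ends where "ends t = (h (u1 t), h (u2 t))" for t
  have "end_count T ends v = card {s\<in>S. h s = v}" for v
  proof -
    have "card {s\<in>S. h s = v} = (\<Sum>s\<in>S. (of_bool (h s = v) :: nat))"
      using S by (simp add: Int_def conj_commute)
    also have "\<dots> = (\<Sum>t\<in>T. \<Sum>s\<in>{s\<in>S. g s = t}. (of_bool (h s = v) :: nat))"
      using g by (intro sum.group[OF S T, symmetric]) auto
    also have "\<dots> = end_count T ends v"
      unfolding end_count_def ends_def using u by (intro sum.cong) auto
    finally show ?thesis by simp
  qed
  then obtain ori where ori: "\<And>v. 2 * card {t\<in>T. tail ori ends t = v} = card {s\<in>S. h s = v}"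
    using balanced_orientation[OF T, of ends] even by metis
  define c where "c t = (if ori t then u1 t else u2 t)" for t
  define d where "d t = (if ori t then u2 t else u1 t)" for t
  have hc: "h (c t) = tail ori ends t" for t unfolding c_def tail_def ends_def by simp
  show ?thesis
  proof (rule that)
    show "c t \<noteq> d t \<and> {s\<in>S. g s = t} = {c t, d t}" if "t \<in> T" for t
      using u[OF that] unfolding c_def d_def by (auto simp: insert_commute)
    show "2 * card {t\<in>T. h (c t) = v} = card {s\<in>S. h s = v}" for v
      unfolding hc by (rule ori)
  qed
qed

section \<open>The P7-factor\<close>

definition edge_positions :: "nat \<Rightarrow> nat set" where
  "edge_positions j = {i. i < 6 \<and> (i = j \<or> Suc i = j)}"

lemma edge_positions_eq: "edge_positions j = {j - 1, j} \<inter> {..<6}"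
  unfolding edge_positions_def by auto

lemma card_edge_positions: "j < 7 \<Longrightarrow> card (edge_positions j) = (if j = 0 \<or> j = 6 then 1 else 2)"
  unfolding edge_positions_eq by (cases j) (auto simp: Int_insert_left card_insert_if)

lemma joins_incident: "joins ends e u w \<Longrightarrow> incident ends e u \<and> incident ends e w"
  unfolding joins_def incident_def by auto

lemma incident_joins: "joins ends e u w \<Longrightarrow> incident ends e v \<Longrightarrow> v = u \<or> v = w"
  unfolding joins_def incident_def by auto

lemma joins_ends_eq: "joins ends e u w \<Longrightarrow> joins ends e u' w' \<Longrightarrow> {u, w} = {u', w'}"
  unfolding joins_def by auto

lemma distinct_nth_pair_eq:
  assumes "distinct xs" "Suc i < length xs" "Suc j < length xs"
    and "{xs ! i, xs ! Suc i} = {xs ! j, xs ! Suc j}"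
  shows "i = j"
  using assms nth_eq_iff_index_eq[OF assms(1)] by (auto simp: doubleton_eq_iff)

locale P7_skeleton =
  fixes X Y :: "'v set" and E :: "'e set" and ends :: "'e \<Rightarrow> 'v \<times> 'v" and Y' :: "'v set"
    and a r :: "'v \<Rightarrow> 'e" and c n q1 q2 :: "'v \<Rightarrow> 'v"
  assumes biregular: "biregular X Y E ends 3 4"
    and Y'_subset: "Y' \<subseteq> Y"
    and a_edge: "x \<in> X \<Longrightarrow> a x \<in> E \<and> fst (ends (a x)) = x \<and> snd (ends (a x)) \<in> Y'"
    and r_edge: "x \<in> X \<Longrightarrow> r x \<in> E \<and> fst (ends (r x)) = x \<and> snd (ends (r x)) \<in> Y - Y'"
    and a_fibre: "y \<in> Y' \<Longrightarrow> {x\<in>X. snd (ends (a x)) = y} = {c y, n y} \<and> c y \<noteq> n y"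
    and r_fibre: "z \<in> Y - Y' \<Longrightarrow> {y\<in>Y'. snd (ends (r (c y))) = z} = {q1 z, q2 z} \<and> q1 z \<noteq> q2 z"
begin

lemma bigraph: "bigraph X Y E ends"
  using biregular unfolding biregular_def by blast

lemma disjoint: "X \<inter> Y = {}"
  using bigraph unfolding bigraph_def by auto

lemma ends_a: "x \<in> X \<Longrightarrow> ends (a x) = (x, snd (ends (a x)))"
  using a_edge by (metis prod.collapse)

lemma ends_r: "x \<in> X \<Longrightarrow> ends (r x) = (x, snd (ends (r x)))"
  using r_edge by (metis prod.collapse)

lemma c_n_facts:
  assumes "y \<in> Y'"
  shows "c y \<in> X" "n y \<in> X" "snd (ends (a (c y))) = y" "snd (ends (a (n y))) = y" "c y \<noteq> n y"
  using a_fibre[OF assms] by (auto simp: set_eq_iff)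

lemma q_facts:
  assumes "z \<in> Y - Y'"
  shows "q1 z \<in> Y'" "q2 z \<in> Y'" "snd (ends (r (c (q1 z)))) = z" "snd (ends (r (c (q2 z)))) = z"
    "q1 z \<noteq> q2 z"
  using r_fibre[OF assms] by (auto simp: set_eq_iff)

lemma ends_a_c_n: "y \<in> Y' \<Longrightarrow> ends (a (c y)) = (c y, y) \<and> ends (a (n y)) = (n y, y)"
  using c_n_facts ends_a by metis

lemma ends_r_c_q: "z \<in> Y - Y' \<Longrightarrow> ends (r (c (q1 z))) = (c (q1 z), z) \<and> ends (r (c (q2 z))) = (c (q2 z), z)"
  using q_facts c_n_facts ends_r by metis

lemma a_end_cases: "x \<in> X \<Longrightarrow> x = c (snd (ends (a x))) \<or> x = n (snd (ends (a x)))"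
  using a_edge a_fibre by blast

lemma r_end_cases: "y \<in> Y' \<Longrightarrow> y = q1 (snd (ends (r (c y)))) \<or> y = q2 (snd (ends (r (c y))))"
  using r_fibre r_edge c_n_facts(1) by blast

definition path :: "'v \<Rightarrow> 'v list" where
  "path z = [n (q1 z), q1 z, c (q1 z), z, c (q2 z), q2 z, n (q2 z)]"

definition path_edges :: "'v \<Rightarrow> 'e list" where
  "path_edges z = [a (n (q1 z)), a (c (q1 z)), r (c (q1 z)), r (c (q2 z)), a (c (q2 z)), a (n (q2 z))]"

definition factor :: "'e set" where
  "factor = (\<Union>z\<in>Y - Y'. set (path_edges z))"

definition path_centre :: "'v \<Rightarrow> 'v" where
  "path_centre v = (if v \<in> X then snd (ends (r (c (snd (ends (a v))))))
              else if v \<in> Y' then snd (ends (r (c v))) else v)"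

lemma length_path [simp]: "length (path z) = 7"
  and length_path_edges [simp]: "length (path_edges z) = 6"
  unfolding path_def path_edges_def by simp_all

lemma path_vertex_side:
  assumes "z \<in> Y - Y'" "j < 7"
  shows "path z ! j \<in> (if even j then X else Y)"
proof -
  have "j = 0 \<or> j = 1 \<or> j = 2 \<or> j = 3 \<or> j = 4 \<or> j = 5 \<or> j = 6" using assms(2) by auto
  then show ?thesis
    using q_facts[OF assms(1)] c_n_facts Y'_subset assms(1)
    unfolding path_def by (elim disjE) auto
qed

lemma set_path:
  assumes "z \<in> Y - Y'"
  shows "set (path z) \<subseteq> X \<union> Y"
proof
  fix v assume "v \<in> set (path z)"
  then obtain j where "j < 7" "v = path z ! j" by (auto simp: in_set_conv_nth)
  then show "v \<in> X \<union> Y" using path_vertex_side[OF assms, of j] by (simp split: if_splits)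
qed

lemma distinct_path:
  assumes z: "z \<in> Y - Y'"
  shows "distinct (path z)"
proof -
  note q = q_facts[OF z] and c1 = c_n_facts[OF q_facts(1)[OF z]] and c2 = c_n_facts[OF q_facts(2)[OF z]]
  have "q1 z \<notin> X" "q2 z \<notin> X" "z \<notin> X" "z \<notin> Y'"
    using q z Y'_subset disjoint by auto
  then show ?thesis
    unfolding path_def using q c1 c2 by auto
qed

lemma path_centre_eq:
  assumes z: "z \<in> Y - Y'" and v: "v \<in> set (path z)"
  shows "path_centre v = z"
proof -
  note q = q_facts[OF z] and c1 = c_n_facts[OF q_facts(1)[OF z]] and c2 = c_n_facts[OF q_facts(2)[OF z]]
  have "q1 z \<notin> X" "q2 z \<notin> X" "z \<notin> X" "z \<notin> Y'"
    using q z Y'_subset disjoint by auto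
  then show ?thesis
    using v q c1 c2 unfolding path_centre_def path_def by auto
qed

lemma paths_disjoint:
  assumes "z \<in> Y - Y'" "z' \<in> Y - Y'" "v \<in> set (path z)" "v \<in> set (path z')"
  shows "z = z'"
  using path_centre_eq[OF assms(1,3)] path_centre_eq[OF assms(2,4)] by simp

lemma on_centre_path:
  assumes "v \<in> X \<union> Y"
  shows "path_centre v \<in> Y - Y' \<and> v \<in> set (path (path_centre v))"
proof -
  have on_path: "y \<in> set (path (snd (ends (r (c y))))) \<and> snd (ends (r (c y))) \<in> Y - Y'"
    if "y \<in> Y'" for y
    using r_end_cases[OF that] r_edge[OF c_n_facts(1)[OF that]] unfolding path_def by auto
  show ?thesis
  proof (cases "v \<in> X")
    case True
    define y where "y = snd (ends (a v))"
    have y: "y \<in> Y'" using a_edge True unfolding y_def by blast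
    have "v = c y \<or> v = n y" using a_end_cases[OF True] unfolding y_def .
    moreover have "y = q1 (path_centre v) \<or> y = q2 (path_centre v)"
      using r_end_cases[OF y] True unfolding path_centre_def y_def by simp
    moreover have "path_centre v \<in> Y - Y'" using on_path[OF y] True unfolding path_centre_def y_def by simp
    ultimately show ?thesis unfolding path_def by auto
  next
    case False
    then show ?thesis using assms on_path unfolding path_centre_def path_def by auto
  qed
qed

lemma path_edge_joins:
  assumes z: "z \<in> Y - Y'" and i: "i < 6"
  shows "path_edges z ! i \<in> E \<and> joins ends (path_edges z ! i) (path z ! i) (path z ! Suc i)"
proof -
  note q = q_facts[OF z] and c1 = c_n_facts[OF q_facts(1)[OF z]] and c2 = c_n_facts[OF q_facts(2)[OF z]]
  have "i = 0 \<or> i = 1 \<or> i = 2 \<or> i = 3 \<or> i = 4 \<or> i = 5" using i by auto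
  then show ?thesis
    using ends_a_c_n[OF q(1)] ends_a_c_n[OF q(2)] ends_r_c_q[OF z] a_edge r_edge c1 c2
    unfolding path_def path_edges_def joins_def by (elim disjE) (simp_all add: numeral_eq_Suc)
qed

lemma distinct_path_edges:
  assumes z: "z \<in> Y - Y'"
  shows "distinct (path_edges z)"
proof -
  have "i = j" if "i < 6" "j < 6" "path_edges z ! i = path_edges z ! j" for i j
  proof -
    have "{path z ! i, path z ! Suc i} = {path z ! j, path z ! Suc j}"
      using joins_ends_eq path_edge_joins[OF z that(1)] path_edge_joins[OF z that(2)] that(3) by metis
    then show "i = j" using distinct_nth_pair_eq[OF distinct_path[OF z]] that by simp
  qed
  then show ?thesis unfolding distinct_conv_nth length_path_edges by blast
qed

lemma path_edge_index_unique:
  assumes z: "z \<in> Y - Y'" "z' \<in> Y - Y'" and i: "i < 6" "i' < 6"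
    and eq: "path_edges z ! i = path_edges z' ! i'"
  shows "z = z' \<and> i = i'"
proof -
  have "{path z ! i, path z ! Suc i} = {path z' ! i', path z' ! Suc i'}"
    using joins_ends_eq path_edge_joins[OF z(1) i(1)] path_edge_joins[OF z(2) i(2)] eq by metis
  then have "path z ! i \<in> set (path z')"
    using i(2) by (auto simp: doubleton_eq_iff)
  moreover have "path z ! i \<in> set (path z)" using i(1) by simp
  ultimately have "z = z'" using paths_disjoint[OF z] by blast
  then show ?thesis
    using distinct_path_edges[OF z(1)] eq i by (simp add: nth_eq_iff_index_eq)
qed

lemma factor_at_path_vertex:
  assumes z: "z \<in> Y - Y'" and j: "j < 7"
  shows "{e\<in>factor. incident ends e (path z ! j)} = (!) (path_edges z) ` edge_positions j"
proof
  show "{e\<in>factor. incident ends e (path z ! j)} \<subseteq> (!) (path_edges z) ` edge_positions j"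
  proof
    fix e assume "e \<in> {e\<in>factor. incident ends e (path z ! j)}"
    then obtain z' i where z': "z' \<in> Y - Y'" and i: "i < 6" and e: "e = path_edges z' ! i"
      and inc: "incident ends e (path z ! j)"
      unfolding factor_def by (auto simp: in_set_conv_nth)
    have "path z ! j = path z' ! i \<or> path z ! j = path z' ! Suc i"
      using incident_joins[OF conjunct2[OF path_edge_joins[OF z' i]]] inc e by blast
    moreover have "z' = z"
    proof -
      have "path z ! j \<in> set (path z')" using calculation i by auto
      moreover have "path z ! j \<in> set (path z)" using j by simp
      ultimately show ?thesis using paths_disjoint[OF z' z] by blast
    qed
    ultimately have "j = i \<or> j = Suc i"
      using distinct_path[OF z] i j by (auto simp: nth_eq_iff_index_eq)
    then show "e \<in> (!) (path_edges z) ` edge_positions j"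
      using e i \<open>z' = z\<close> unfolding edge_positions_def by auto
  qed
  show "(!) (path_edges z) ` edge_positions j \<subseteq> {e\<in>factor. incident ends e (path z ! j)}"
  proof
    fix e assume "e \<in> (!) (path_edges z) ` edge_positions j"
    then obtain i where i: "i < 6" "i = j \<or> Suc i = j" and e: "e = path_edges z ! i"
      unfolding edge_positions_def by auto
    have "e \<in> factor" using z i e unfolding factor_def by force
    moreover have "incident ends e (path z ! j)"
      using joins_incident[OF conjunct2[OF path_edge_joins[OF z i(1)]]] i(2) e by auto
    ultimately show "e \<in> {e\<in>factor. incident ends e (path z ! j)}" by blast
  qed
qed

lemma factor_subset: "factor \<subseteq> E"
  unfolding factor_def using path_edge_joins by (auto simp: in_set_conv_nth)

lemma P7_factor: "P7_factor (X \<union> Y) E ends"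
  unfolding P7_factor_def
proof (intro exI[of _ factor] exI[of _ "path ` (Y - Y')"] conjI ballI allI impI)
  show "factor \<subseteq> E" by (rule factor_subset)
  show "distinct p" "length p = 7" if "p \<in> path ` (Y - Y')" for p
    using that distinct_path by auto
  show "set p \<inter> set q = {}" if "p \<in> path ` (Y - Y')" "q \<in> path ` (Y - Y')" "p \<noteq> q" for p q
    using that paths_disjoint by blast
  show "(\<Union>p\<in>path ` (Y - Y'). set p) = X \<union> Y"
    using set_path on_centre_path by blast
next
  fix p i assume p: "p \<in> path ` (Y - Y')" and i: "i < (6::nat)"
  then obtain z where z: "z \<in> Y - Y'" and p: "p = path z" by blast
  show "\<exists>!e. e \<in> factor \<and> joins ends e (p ! i) (p ! Suc i)"
  proof
    show "path_edges z ! i \<in> factor \<and> joins ends (path_edges z ! i) (p ! i) (p ! Suc i)"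
      using path_edge_joins[OF z i] z i p unfolding factor_def by force
  next
    fix e assume e: "e \<in> factor \<and> joins ends e (p ! i) (p ! Suc i)"
    have "e \<in> {e\<in>factor. incident ends e (path z ! i)}"
      and "e \<in> {e\<in>factor. incident ends e (path z ! Suc i)}"
      using e joins_incident[of ends e] p by auto
    then have "e \<in> (!) (path_edges z) ` edge_positions i"
      and "e \<in> (!) (path_edges z) ` edge_positions (Suc i)"
      using factor_at_path_vertex[OF z] i by auto
    then show "e = path_edges z ! i"
      using distinct_path_edges[OF z] unfolding edge_positions_def by (auto simp: nth_eq_iff_index_eq)
  qed
next
  fix e assume "e \<in> factor"
  then obtain z i where "z \<in> Y - Y'" "i < 6" "e = path_edges z ! i"
    unfolding factor_def by (auto simp: in_set_conv_nth)
  then show "\<exists>p\<in>path ` (Y - Y'). \<exists>i<6. joins ends e (p ! i) (p ! Suc i)"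
    using path_edge_joins by blast
qed

end

section \<open>The interval 6-colouring\<close>

text \<open>Colours of the six edges of a path, given whether the single remaining edge at the vertex in
  position 2, resp. 4, is coloured 3; every other vertex of the path carries two remaining edges,
  coloured 3 and 4.\<close>
definition path_colours :: "bool \<Rightarrow> bool \<Rightarrow> nat list" where
  "path_colours s t =
     (if s then (if t then [5, 2, 1, 2, 1, 2] else [2, 1, 2, 5, 6, 5])
      else (if t then [5, 6, 5, 2, 1, 2] else [2, 5, 6, 5, 6, 5]))"

lemma length_path_colours [simp]: "length (path_colours s t) = 6"
  unfolding path_colours_def by simp

lemma path_colours_range: "set (path_colours s t) \<subseteq> {1..6}"
  unfolding path_colours_def by auto

definition vertex_colours :: "bool \<Rightarrow> bool \<Rightarrow> nat \<Rightarrow> nat set" where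
  "vertex_colours s t j = (!) (path_colours s t) ` edge_positions j \<union>
     (if j = 2 then {if s then 3 else 4} else if j = 4 then {if t then 3 else 4} else {3, 4})"

lemma vertex_colours_interval:
  assumes "j < 7"
  shows "\<exists>lo. vertex_colours s t j = {lo..lo + (if even j then 2 else 3)}"
proof (rule exI)
  have "j = 0 \<or> j = 1 \<or> j = 2 \<or> j = 3 \<or> j = 4 \<or> j = 5 \<or> j = 6" using assms by auto
  then show "vertex_colours s t j = {Min (vertex_colours s t j)..Min (vertex_colours s t j) + (if even j then 2 else 3)}"
    unfolding vertex_colours_def edge_positions_eq path_colours_def
    by (elim disjE; cases s; cases t; simp add: insert_commute; auto)
qed

context P7_skeleton
begin

definition rest_edges :: "'e set" where
  "rest_edges = E - factor"

lemma rest_bigraph: "bigraph X Y rest_edges ends"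
  using bigraph unfolding bigraph_def rest_edges_def by auto

lemma deg_path_vertex:
  assumes "z \<in> Y - Y'" "j < 7"
  shows "deg E ends (path z ! j) = (if even j then 3 else 4)"
  using biregular path_vertex_side[OF assms] unfolding biregular_def by (auto split: if_splits)

lemma deg_factor_path_vertex:
  assumes z: "z \<in> Y - Y'" and j: "j < 7"
  shows "card {e\<in>factor. incident ends e (path z ! j)} = card (edge_positions j)"
proof -
  have "inj_on ((!) (path_edges z)) (edge_positions j)"
    using distinct_path_edges[OF z] unfolding edge_positions_def inj_on_def
    by (auto simp: nth_eq_iff_index_eq)
  then show ?thesis unfolding factor_at_path_vertex[OF z j] by (rule card_image)
qed

lemma deg_rest_path_vertex:
  assumes z: "z \<in> Y - Y'" and j: "j < 7"
  shows "deg rest_edges ends (path z ! j) = (if j = 2 \<or> j = 4 then 1 else 2)"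
proof -
  let ?v = "path z ! j"
  have fin: "finite E" using bigraph unfolding bigraph_def by blast
  have "{e\<in>E. incident ends e ?v} = {e\<in>factor. incident ends e ?v} \<union> {e\<in>rest_edges. incident ends e ?v}"
    using factor_subset unfolding rest_edges_def by auto
  then have "deg E ends ?v = card ({e\<in>factor. incident ends e ?v} \<union> {e\<in>rest_edges. incident ends e ?v})"
    unfolding deg_def by simp
  also have "\<dots> = card {e\<in>factor. incident ends e ?v} + deg rest_edges ends ?v"
    unfolding deg_def using fin finite_subset[OF factor_subset fin]
    by (intro card_Un_disjoint) (auto simp: rest_edges_def)
  finally have "deg E ends ?v = card {e\<in>factor. incident ends e ?v} + deg rest_edges ends ?v" .
  then show ?thesis
    using deg_path_vertex[OF z j] deg_factor_path_vertex[OF z j] card_edge_positions[OF j] j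
    by (auto split: if_splits)
qed

lemma path_vertex_index:
  assumes "v \<in> X \<union> Y"
  obtains j where "j < 7" "v = path (path_centre v) ! j"
  using on_centre_path[OF assms] by (metis in_set_conv_nth length_path)

lemma deg_rest_le_2: "deg rest_edges ends v \<le> 2"
proof (cases "v \<in> X \<union> Y")
  case True
  then obtain j where j: "j < 7" "v = path (path_centre v) ! j" by (rule path_vertex_index)
  have "deg rest_edges ends (path (path_centre v) ! j) \<le> 2"
    using deg_rest_path_vertex[OF _ j(1)] on_centre_path[OF True] by simp
  then show ?thesis using j(2) by metis
next
  case False
  then have none: "{e\<in>rest_edges. incident ends e v} = {}"
    using rest_bigraph unfolding bigraph_def incident_def by auto
  show ?thesis unfolding deg_def none by simp
qed

definition rest_bit :: "('e \<Rightarrow> bool) \<Rightarrow> 'v \<Rightarrow> bool" where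
  "rest_bit tc v \<longleftrightarrow> (\<exists>e\<in>rest_edges. incident ends e v \<and> tc e)"

definition path_table :: "('e \<Rightarrow> bool) \<Rightarrow> 'v \<Rightarrow> nat list" where
  "path_table tc z = path_colours (rest_bit tc (path z ! 2)) (rest_bit tc (path z ! 4))"

definition colouring :: "('e \<Rightarrow> bool) \<Rightarrow> 'e \<Rightarrow> nat" where
  "colouring tc e = (if e \<in> rest_edges then (if tc e then 3 else 4)
     else (THE k. \<exists>z\<in>Y - Y'. \<exists>i<6. e = path_edges z ! i \<and> k = path_table tc z ! i))"

lemma colouring_path_edge:
  assumes z: "z \<in> Y - Y'" and i: "i < 6"
  shows "colouring tc (path_edges z ! i) = path_table tc z ! i"
proof -
  have "path_edges z ! i \<notin> rest_edges" using z i unfolding rest_edges_def factor_def by force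
  moreover have "(THE k. \<exists>z'\<in>Y - Y'. \<exists>i'<6. path_edges z ! i = path_edges z' ! i' \<and> k = path_table tc z' ! i')
      = path_table tc z ! i"
    using z i path_edge_index_unique[OF z] by (intro the_equality) blast+
  ultimately show ?thesis unfolding colouring_def by simp
qed

lemma rest_colours:
  assumes tc: "proper_edge_colouring rest_edges ends tc"
  shows "deg rest_edges ends v = 1 \<Longrightarrow> colouring tc ` {e\<in>rest_edges. incident ends e v} = {if rest_bit tc v then 3 else 4}"
    and "deg rest_edges ends v = 2 \<Longrightarrow> colouring tc ` {e\<in>rest_edges. incident ends e v} = {3, 4}"
proof -
  assume "deg rest_edges ends v = 1"
  then obtain e where e: "{e\<in>rest_edges. incident ends e v} = {e}" unfolding deg_def by (auto simp: card_Suc_eq)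
  then have "rest_bit tc v = tc e" unfolding rest_bit_def by (auto simp: set_eq_iff)
  then show "colouring tc ` {e\<in>rest_edges. incident ends e v} = {if rest_bit tc v then 3 else 4}"
    using e unfolding colouring_def by auto
next
  assume "deg rest_edges ends v = 2"
  then obtain e f where ef: "{e\<in>rest_edges. incident ends e v} = {e, f}" "e \<noteq> f"
    unfolding deg_def by (auto simp: card_2_iff)
  then have "tc e \<noteq> tc f" using tc unfolding proper_edge_colouring_def by blast
  then show "colouring tc ` {e\<in>rest_edges. incident ends e v} = {3, 4}"
    using ef unfolding colouring_def by auto
qed

lemma colouring_at_path_vertex:
  assumes tc: "proper_edge_colouring rest_edges ends tc" and z: "z \<in> Y - Y'" and j: "j < 7"
  shows "colouring tc ` {e\<in>E. incident ends e (path z ! j)}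
    = vertex_colours (rest_bit tc (path z ! 2)) (rest_bit tc (path z ! 4)) j"
proof -
  let ?v = "path z ! j"
  have split: "{e\<in>E. incident ends e ?v} = {e\<in>factor. incident ends e ?v} \<union> {e\<in>rest_edges. incident ends e ?v}"
    using factor_subset unfolding rest_edges_def by auto
  have "colouring tc ` {e\<in>factor. incident ends e ?v} = (!) (path_table tc z) ` edge_positions j"
    unfolding factor_at_path_vertex[OF z j] image_image
    using colouring_path_edge[OF z] unfolding edge_positions_def by (intro image_cong) auto
  moreover have "colouring tc ` {e\<in>rest_edges. incident ends e ?v} =
      (if j = 2 then {if rest_bit tc (path z ! 2) then 3 else 4}
       else if j = 4 then {if rest_bit tc (path z ! 4) then 3 else 4} else {3, 4})"
    using rest_colours(1)[OF tc, of ?v] rest_colours(2)[OF tc, of ?v] deg_rest_path_vertex[OF z j]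
    by (cases "j = 2"; cases "j = 4") simp_all
  ultimately show ?thesis
    unfolding split image_Un vertex_colours_def path_table_def by simp
qed

lemma colouring_range:
  assumes "e \<in> E"
  shows "colouring tc e \<in> {1..6}"
proof (cases "e \<in> rest_edges")
  case False
  then obtain z i where "z \<in> Y - Y'" "i < 6" "e = path_edges z ! i"
    using assms unfolding rest_edges_def factor_def by (auto simp: in_set_conv_nth)
  then show ?thesis
    using colouring_path_edge path_colours_range unfolding path_table_def
    by (metis length_path_colours nth_mem subsetD)
qed (simp add: colouring_def)

lemma colouring_at_vertex:
  assumes tc: "proper_edge_colouring rest_edges ends tc" and v: "v \<in> X \<union> Y"
  shows "inj_on (colouring tc) {e\<in>E. incident ends e v}"
    and "\<exists>lo hi. colouring tc ` {e\<in>E. incident ends e v} = {lo..hi}"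
proof -
  define z where "z = path_centre v"
  obtain j where j: "j < 7" "v = path z ! j" using path_vertex_index[OF v] unfolding z_def .
  have z: "z \<in> Y - Y'" using on_centre_path[OF v] unfolding z_def by blast
  obtain lo where "vertex_colours (rest_bit tc (path z ! 2)) (rest_bit tc (path z ! 4)) j
      = {lo..lo + (if even j then 2 else 3)}"
    using vertex_colours_interval[OF j(1)] by blast
  then have lo: "colouring tc ` {e\<in>E. incident ends e v} = {lo..lo + (if even j then 2 else 3)}"
    using colouring_at_path_vertex[OF tc z j(1)] j(2) by simp
  then show "\<exists>lo hi. colouring tc ` {e\<in>E. incident ends e v} = {lo..hi}" by blast
  have "card (colouring tc ` {e\<in>E. incident ends e v}) = card {e\<in>E. incident ends e v}"
    using deg_path_vertex[OF z j(1)] unfolding lo deg_def j(2)[symmetric] by simp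
  moreover have "finite E" using bigraph unfolding bigraph_def by blast
  ultimately show "inj_on (colouring tc) {e\<in>E. incident ends e v}"
    by (intro eq_card_imp_inj_on) simp_all
qed

lemma interval_colouring: "\<exists>col. interval_coloring 6 (X \<union> Y) E ends col"
proof -
  obtain tc :: "'e \<Rightarrow> bool" where tc: "proper_edge_colouring rest_edges ends tc"
    using bigraph_edge_colouring_degree_le_2[OF rest_bigraph deg_rest_le_2] by blast
  have "interval_coloring 6 (X \<union> Y) E ends (colouring tc)"
    unfolding interval_coloring_def
    using colouring_range colouring_at_vertex[OF tc] by (blast dest: inj_onD)
  then show ?thesis by blast
qed

end

section \<open>Constructing the paths\<close>

lemma deg_bigraph_left:
  assumes "bigraph X Y E ends" "x \<in> X"
  shows "deg E ends x = card {e\<in>E. fst (ends e) = x}"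
proof -
  have "{e\<in>E. incident ends e x} = {e\<in>E. fst (ends e) = x}"
    using assms unfolding bigraph_def incident_def by auto
  then show ?thesis unfolding deg_def by simp
qed

lemma deg_bigraph_right:
  assumes "bigraph X Y E ends" "y \<in> Y"
  shows "deg E ends y = card {e\<in>E. snd (ends e) = y}"
proof -
  have "{e\<in>E. incident ends e y} = {e\<in>E. snd (ends e) = y}"
    using assms unfolding bigraph_def incident_def by auto
  then show ?thesis unfolding deg_def by simp
qed

locale biregular_with_subgraph =
  fixes X Y :: "'v set" and E :: "'e set" and ends :: "'e \<Rightarrow> 'v \<times> 'v" and Y' :: "'v set" and F :: "'e set"
  assumes G: "biregular X Y E ends 3 4"
    and Y'_subset: "Y' \<subseteq> Y" and F_subset: "F \<subseteq> E"
    and H: "biregular X Y' F ends 2 4"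
begin

lemma G_bigraph: "bigraph X Y E ends" and H_bigraph: "bigraph X Y' F ends"
  using G H unfolding biregular_def by blast+

lemma finite_E: "finite E" and finite_F: "finite F" and finite_X: "finite X" and finite_Y': "finite Y'"
  and ends_E: "e \<in> E \<Longrightarrow> fst (ends e) \<in> X \<and> snd (ends e) \<in> Y"
  and ends_F: "e \<in> F \<Longrightarrow> fst (ends e) \<in> X \<and> snd (ends e) \<in> Y'"
  using G_bigraph H_bigraph unfolding bigraph_def by auto

lemma card_E_left: "x \<in> X \<Longrightarrow> card {e\<in>E. fst (ends e) = x} = 3"
  and card_E_right: "y \<in> Y \<Longrightarrow> card {e\<in>E. snd (ends e) = y} = 4"
  and card_F_left: "x \<in> X \<Longrightarrow> card {e\<in>F. fst (ends e) = x} = 2"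
  and card_F_right: "y \<in> Y' \<Longrightarrow> card {e\<in>F. snd (ends e) = y} = 4"
  using G H deg_bigraph_left[OF G_bigraph] deg_bigraph_right[OF G_bigraph]
    deg_bigraph_left[OF H_bigraph] deg_bigraph_right[OF H_bigraph]
  unfolding biregular_def by auto

lemma E_right_in_F: "y \<in> Y' \<Longrightarrow> {e\<in>E. snd (ends e) = y} = {e\<in>F. snd (ends e) = y}"
  using card_E_right[of y] card_F_right[of y] Y'_subset F_subset finite_E
  by (intro card_seteq[symmetric]) auto

lemma choose_a:
  obtains a where "\<And>x. x \<in> X \<Longrightarrow> a x \<in> F \<and> fst (ends (a x)) = x"
    and "\<And>y. y \<in> Y' \<Longrightarrow> card {x\<in>X. snd (ends (a x)) = y} = 2"
proof -
  have "even (card {e\<in>F. snd (ends e) = v})" for v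
  proof (cases "v \<in> Y'")
    case False
    then have empty: "{e\<in>F. snd (ends e) = v} = {}" using ends_F by auto
    show ?thesis unfolding empty by simp
  qed (simp add: card_F_right)
  then obtain a b where ab: "\<And>x. x \<in> X \<Longrightarrow> a x \<noteq> b x \<and> {e\<in>F. fst (ends e) = x} = {a x, b x}"
    and half: "\<And>v. 2 * card {x\<in>X. snd (ends (a x)) = v} = card {e\<in>F. snd (ends e) = v}"
    using pair_choice_halving[where g = "\<lambda>e. fst (ends e)" and h = "\<lambda>e. snd (ends e)",
      OF finite_F finite_X] ends_F card_F_left by blast
  show ?thesis
  proof (rule that)
    show "a x \<in> F \<and> fst (ends (a x)) = x" if "x \<in> X" for x using ab[OF that] by blast
    show "card {x\<in>X. snd (ends (a x)) = y} = 2" if "y \<in> Y'" for y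
      using half[of y] card_F_right[OF that] by simp
  qed
qed

lemma choose_r:
  obtains r where "\<And>x. x \<in> X \<Longrightarrow> {e\<in>E - F. fst (ends e) = x} = {r x}"
proof -
  have "card {e\<in>E - F. fst (ends e) = x} = 1" if "x \<in> X" for x
  proof -
    have "{e\<in>E. fst (ends e) = x} = {e\<in>F. fst (ends e) = x} \<union> {e\<in>E - F. fst (ends e) = x}"
      using F_subset by auto
    moreover have "card ({e\<in>F. fst (ends e) = x} \<union> {e\<in>E - F. fst (ends e) = x})
        = card {e\<in>F. fst (ends e) = x} + card {e\<in>E - F. fst (ends e) = x}"
      using finite_E finite_F by (intro card_Un_disjoint) auto
    ultimately have "card {e\<in>E. fst (ends e) = x} = card {e\<in>F. fst (ends e) = x} + card {e\<in>E - F. fst (ends e) = x}"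
      by simp
    then show ?thesis using card_E_left[OF that] card_F_left[OF that] by simp
  qed
  then have "\<forall>x\<in>X. \<exists>e. {e\<in>E - F. fst (ends e) = x} = {e}"
    by (simp add: card_1_singleton_iff)
  then show ?thesis using that by metis
qed

context
  fixes r :: "'v \<Rightarrow> 'e"
  assumes r: "\<And>x. x \<in> X \<Longrightarrow> {e\<in>E - F. fst (ends e) = x} = {r x}"
begin

lemma r_edge:
  assumes "x \<in> X"
  shows "r x \<in> E - F" "fst (ends (r x)) = x" "snd (ends (r x)) \<in> Y - Y'"
  using r[OF assms] ends_E E_right_in_F by blast+

lemma inj_on_r: "inj_on r X"
  using r_edge(2) by (metis inj_onI)

lemma r_fibre_card:
  assumes z: "z \<in> Y - Y'"
  shows "card {x\<in>X. snd (ends (r x)) = z} = 4"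
proof -
  txt \<open>An edge ending in Y - Y' is not in F, so it is the edge r of its left end.\<close>
  have "e \<in> r ` {x\<in>X. snd (ends (r x)) = z}" if e: "e \<in> E" "snd (ends e) = z" for e
  proof (rule rev_image_eqI)
    show "e = r (fst (ends e))"
      using r[of "fst (ends e)"] ends_E[OF e(1)] ends_F z e by blast
    then show "fst (ends e) \<in> {x\<in>X. snd (ends (r x)) = z}" using ends_E e by auto
  qed
  then have "{e\<in>E. snd (ends e) = z} = r ` {x\<in>X. snd (ends (r x)) = z}"
    using r_edge by auto
  moreover have "inj_on r {x\<in>X. snd (ends (r x)) = z}"
    using inj_on_r by (rule inj_on_subset) blast
  ultimately show ?thesis using card_E_right[of z] z by (simp add: card_image)
qed

end

lemma skeleton_exists: "\<exists>a r c n q1 q2. P7_skeleton X Y E ends Y' a r c n q1 q2"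
proof -
  obtain a where a: "\<And>x. x \<in> X \<Longrightarrow> a x \<in> F \<and> fst (ends (a x)) = x"
    and a_pairs: "\<And>y. y \<in> Y' \<Longrightarrow> card {x\<in>X. snd (ends (a x)) = y} = 2"
    using choose_a by blast
  have a_end: "snd (ends (a x)) \<in> Y'" if "x \<in> X" for x
    using a[OF that] ends_F by blast
  obtain r where r: "\<And>x. x \<in> X \<Longrightarrow> {e\<in>E - F. fst (ends e) = x} = {r x}"
    using choose_r by blast
  have r_even: "even (card {x\<in>X. snd (ends (r x)) = v})" for v
  proof (cases "v \<in> Y - Y'")
    case False
    then have empty: "{x\<in>X. snd (ends (r x)) = v} = {}" using r_edge(3)[OF r] by auto
    show ?thesis unfolding empty by simp
  qed (simp add: r_fibre_card[OF r])
  obtain c n where c_n: "\<And>y. y \<in> Y' \<Longrightarrow> c y \<noteq> n y \<and> {x\<in>X. snd (ends (a x)) = y} = {c y, n y}"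
    and half: "\<And>v. 2 * card {y\<in>Y'. snd (ends (r (c y))) = v} = card {x\<in>X. snd (ends (r x)) = v}"
    using pair_choice_halving[where g = "\<lambda>x. snd (ends (a x))" and h = "\<lambda>x. snd (ends (r x))",
      OF finite_X finite_Y' a_end a_pairs r_even] by blast
  have "card {y\<in>Y'. snd (ends (r (c y))) = z} = 2" if "z \<in> Y - Y'" for z
    using half[of z] r_fibre_card[OF r that] by simp
  then have "\<forall>z\<in>Y - Y'. \<exists>p q. {y\<in>Y'. snd (ends (r (c y))) = z} = {p, q} \<and> p \<noteq> q"
    by (simp add: card_2_iff)
  then obtain q1 q2 where q: "\<And>z. z \<in> Y - Y' \<Longrightarrow>
      {y\<in>Y'. snd (ends (r (c y))) = z} = {q1 z, q2 z} \<and> q1 z \<noteq> q2 z"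
    by metis
  have "P7_skeleton X Y E ends Y' a r c n q1 q2"
  proof
    show "biregular X Y E ends 3 4" "Y' \<subseteq> Y" by (fact G Y'_subset)+
    show "a x \<in> E \<and> fst (ends (a x)) = x \<and> snd (ends (a x)) \<in> Y'" if "x \<in> X" for x
      using a[OF that] a_end[OF that] F_subset by blast
    show "r x \<in> E \<and> fst (ends (r x)) = x \<and> snd (ends (r x)) \<in> Y - Y'" if "x \<in> X" for x
      using r_edge[OF r that] by blast
    show "{x\<in>X. snd (ends (a x)) = y} = {c y, n y} \<and> c y \<noteq> n y" if "y \<in> Y'" for y
      using c_n[OF that] by blast
  qed (fact q)
  then show ?thesis by blast
qed

end

theorem mainTheorem5:
  fixes X Y :: "'v set" and E :: "'e set" and ends :: "'e \<Rightarrow> 'v \<times> 'v"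
  assumes "biregular X Y E ends 3 4"
    and "\<exists>Y' F. Y' \<subseteq> Y \<and> F \<subseteq> E \<and> biregular X Y' F ends 2 4"
  shows "P7_factor (X \<union> Y) E ends \<and> (\<exists>c. interval_coloring 6 (X \<union> Y) E ends c)"
proof -
  obtain Y' F where "Y' \<subseteq> Y" "F \<subseteq> E" "biregular X Y' F ends 2 4"
    using assms(2) by blast
  then interpret biregular_with_subgraph X Y E ends Y' F
    using assms(1) by unfold_locales
  obtain a r c n q1 q2 where skeleton: "P7_skeleton X Y E ends Y' a r c n q1 q2"
    using skeleton_exists by blast
  show ?thesis
    using P7_skeleton.P7_factor[OF skeleton] P7_skeleton.interval_colouring[OF skeleton] by blast
qed

end
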